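(* Let $A\| B$ be a right D2 extension. Then the maps $$S\otimes_R\mathcal E\to\mathrm{Hom}({}_BA\otimes_BA,{}_BA),\quad \alpha\otimes f\mapsto(a\otimes a'\mapsto\alpha(a)f(a'))$$ and $$S\otimes_RS\otimes_R\mathcal E\to\mathrm{Hom}({}_BA\otimes_BA\otimes_BA,{}_BA),\quad \alpha\otimes\beta\otimes f\mapsto(a\otimes a'\otimes a''\mapsto\alpha(a)\beta(a')f(a''))$$ are isomorphisms. (The inverse of the first is $F\mapsto\sum_j\gamma_j\otimes u_j^1F(u_j^2\otimes-)$ for any right D2 quasibase $\gamma_j,u_j$.)
   Context: Algebras over a commutative ring $K$; $A\| B$ a unit-preserving algebra homomorphism $B\to A$; $R=A^B$ the centralizer; $S=\mathrm{End}({}_BA_B)$, $\mathcal E=\mathrm{End}({}_BA)$ (left $B$-linear endomorphisms), both under composition; $T=(A\otimes_BA)^B$ with Sweedler notation $t=t^1\otimes t^2$. $S$ is an $R$-bimodule via $r\cdot\alpha\cdot r'=r\alpha(-)r'$ and $\mathcal E$ a left $R$-module via $r\cdot f=rf(-)$. $A\| B$ is right D2 if $A\otimes_BA$ is isomorphic as an $A$-$B$-bimodule to a direct summand of some finite direct sum $A^n$; equivalently there is a right D2 quasibase: finitely many $\gamma_j\in S,u_j\in T$ with $a\otimes_Ba'=\sum_ja\gamma_j(a')u_j^1\otimes u_j^2$ for all $a,a'\in A$. *)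

theory Defs
  imports Main "HOL-Library.Function_Algebras"
begin

text \<open>Unit-preserving ring homomorphism B to A (the extension A | B).
  The ground ring K plays no role: every ring is a Z-algebra and all
  maps below are additive, hence K-linear automatically.\<close>
definition unital_hom :: "('b::ring_1 \<Rightarrow> 'a::ring_1) \<Rightarrow> bool" where
  "unital_hom \<phi> \<longleftrightarrow> \<phi> 1 = 1 \<and> (\<forall>x y. \<phi> (x + y) = \<phi> x + \<phi> y) \<and> (\<forall>x y. \<phi> (x * y) = \<phi> x * \<phi> y)"

definition additive :: "('a::ring_1 \<Rightarrow> 'a) \<Rightarrow> bool" where
  "additive f \<longleftrightarrow> (\<forall>x y. f (x + y) = f x + f y)"

definition Sset :: "('b::ring_1 \<Rightarrow> 'a::ring_1) \<Rightarrow> ('a \<Rightarrow> 'a) set" where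
  "Sset \<phi> = {\<alpha>. additive \<alpha> \<and> (\<forall>b x. \<alpha> (\<phi> b * x) = \<phi> b * \<alpha> x \<and> \<alpha> (x * \<phi> b) = \<alpha> x * \<phi> b)}"

definition Eset :: "('b::ring_1 \<Rightarrow> 'a::ring_1) \<Rightarrow> ('a \<Rightarrow> 'a) set" where
  "Eset \<phi> = {f. additive f \<and> (\<forall>b x. f (\<phi> b * x) = \<phi> b * f x)}"

definition Rset :: "('b::ring_1 \<Rightarrow> 'a::ring_1) \<Rightarrow> 'a set" where
  "Rset \<phi> = {r. \<forall>b. r * \<phi> b = \<phi> b * r}"

text \<open>Generic n-fold balanced tensor product M_1 (x)_R ... (x)_R M_n of modules
  living in one additive group 'x. A formal sum of pure tensors is a list of
  n-tuples (each tuple a list of length n); the tensor product is the quotient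
  of such lists by the congruence tensor_eq generated by the defining relations.\<close>
definition tuples :: "'x set list \<Rightarrow> 'x list set" where
  "tuples Ms = {x. length x = length Ms \<and> (\<forall>i<length Ms. x ! i \<in> Ms ! i)}"

inductive tensor_eq :: "'x::ab_group_add set list \<Rightarrow> 'r set \<Rightarrow> ('x \<Rightarrow> 'r \<Rightarrow> 'x) \<Rightarrow> ('r \<Rightarrow> 'x \<Rightarrow> 'x)
    \<Rightarrow> 'x list list \<Rightarrow> 'x list list \<Rightarrow> bool"
  for Ms R ract lact where
  refl: "set l \<subseteq> tuples Ms \<Longrightarrow> tensor_eq Ms R ract lact l l"
| sym: "tensor_eq Ms R ract lact l l' \<Longrightarrow> tensor_eq Ms R ract lact l' l"
| trans: "tensor_eq Ms R ract lact l l' \<Longrightarrow> tensor_eq Ms R ract lact l' l''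
      \<Longrightarrow> tensor_eq Ms R ract lact l l''"
| app: "tensor_eq Ms R ract lact l1 l2 \<Longrightarrow> tensor_eq Ms R ract lact l3 l4
      \<Longrightarrow> tensor_eq Ms R ract lact (l1 @ l3) (l2 @ l4)"
| swap: "x \<in> tuples Ms \<Longrightarrow> y \<in> tuples Ms \<Longrightarrow> tensor_eq Ms R ract lact [x, y] [y, x]"
| add: "i < length Ms \<Longrightarrow> x \<in> tuples Ms \<Longrightarrow> y \<in> tuples Ms
      \<Longrightarrow> (\<forall>j. j \<noteq> i \<longrightarrow> x ! j = y ! j) \<Longrightarrow> x[i := x ! i + y ! i] \<in> tuples Ms
      \<Longrightarrow> tensor_eq Ms R ract lact [x[i := x ! i + y ! i]] [x, y]"
| zero: "i < length Ms \<Longrightarrow> x \<in> tuples Ms \<Longrightarrow> x ! i = 0 \<Longrightarrow> tensor_eq Ms R ract lact [x] []"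
| bal: "Suc i < length Ms \<Longrightarrow> x \<in> tuples Ms \<Longrightarrow> r \<in> R
      \<Longrightarrow> x[i := ract (x ! i) r] \<in> tuples Ms \<Longrightarrow> x[Suc i := lact r (x ! Suc i)] \<in> tuples Ms
      \<Longrightarrow> tensor_eq Ms R ract lact [x[i := ract (x ! i) r]] [x[Suc i := lact r (x ! Suc i)]]"

abbreviation Atensor_eq :: "('b::ring_1 \<Rightarrow> 'a::ring_1) \<Rightarrow> nat \<Rightarrow> 'a list list \<Rightarrow> 'a list list \<Rightarrow> bool" where
  "Atensor_eq \<phi> n \<equiv> tensor_eq (replicate n UNIV) (range \<phi>) (\<lambda>x r. x * r) (\<lambda>r x. r * x)"

abbreviation Atuples :: "nat \<Rightarrow> 'a list set" where
  "Atuples n \<equiv> tuples (replicate n (UNIV :: 'a set))"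

text \<open>Hom(_B A (x)_B ... (x)_B A, _B A): additive, left B-linear maps on the
  tensor power, represented as functions on formal sums respecting tensor_eq.\<close>
definition AT_hom :: "('b::ring_1 \<Rightarrow> 'a::ring_1) \<Rightarrow> nat \<Rightarrow> ('a list list \<Rightarrow> 'a) set" where
  "AT_hom \<phi> n = {h.
     (\<forall>l l'. Atensor_eq \<phi> n l l' \<longrightarrow> h l = h l') \<and>
     (\<forall>l l'. set l \<subseteq> Atuples n \<longrightarrow> set l' \<subseteq> Atuples n \<longrightarrow> h (l @ l') = h l + h l') \<and>
     (\<forall>b l. set l \<subseteq> Atuples n \<longrightarrow> h (map (\<lambda>x. x[0 := \<phi> b * x ! 0]) l) = \<phi> b * h l)}"

definition ractF :: "('a::ring_1 \<Rightarrow> 'a) \<Rightarrow> 'a \<Rightarrow> ('a \<Rightarrow> 'a)" where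
  "ractF \<alpha> r = (\<lambda>x. \<alpha> x * r)"
definition lactF :: "'a::ring_1 \<Rightarrow> ('a \<Rightarrow> 'a) \<Rightarrow> ('a \<Rightarrow> 'a)" where
  "lactF r f = (\<lambda>x. r * f x)"

definition eval_tensor :: "('a::ring_1 \<Rightarrow> 'a) list list \<Rightarrow> 'a list list \<Rightarrow> 'a" where
  "eval_tensor t l = sum_list [prod_list (map2 (\<lambda>f a. f a) y x). x \<leftarrow> l, y \<leftarrow> t]"

text \<open>The canonical map M_1 (x)_R ... (x)_R M_n \<rightarrow> Hom(_B A^{(x)n}, _B A) is well defined
  and an isomorphism (bijective; additivity is automatic).\<close>
definition tensor_hom_iso :: "('b::ring_1 \<Rightarrow> 'a::ring_1) \<Rightarrow> ('a \<Rightarrow> 'a) set list \<Rightarrow> bool" where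
  "tensor_hom_iso \<phi> Ms \<longleftrightarrow>
     (\<forall>t. set t \<subseteq> tuples Ms \<longrightarrow> eval_tensor t \<in> AT_hom \<phi> (length Ms)) \<and>
     (\<forall>t t'. set t \<subseteq> tuples Ms \<longrightarrow> set t' \<subseteq> tuples Ms \<longrightarrow>
        ((\<forall>l. set l \<subseteq> Atuples (length Ms) \<longrightarrow> eval_tensor t l = eval_tensor t' l)
         \<longleftrightarrow> tensor_eq Ms (Rset \<phi>) ractF lactF t t')) \<and>
     (\<forall>h \<in> AT_hom \<phi> (length Ms). \<exists>t. set t \<subseteq> tuples Ms \<and>
        (\<forall>l. set l \<subseteq> Atuples (length Ms) \<longrightarrow> h l = eval_tensor t l))"

text \<open>T = (A (x)_B A)^B\<close>
definition Tset :: "('b::ring_1 \<Rightarrow> 'a::ring_1) \<Rightarrow> 'a list list set" where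
  "Tset \<phi> = {u. set u \<subseteq> Atuples 2 \<and>
     (\<forall>b. Atensor_eq \<phi> 2 (map (\<lambda>x. [\<phi> b * x ! 0, x ! 1]) u) (map (\<lambda>x. [x ! 0, x ! 1 * \<phi> b]) u))}"

text \<open>Right D2 via a right D2 quasibase:
  a (x) a' = sum_j a gamma_j(a') u_j^1 (x) u_j^2.\<close>
definition right_D2 :: "('b::ring_1 \<Rightarrow> 'a::ring_1) \<Rightarrow> bool" where
  "right_D2 \<phi> \<longleftrightarrow> (\<exists>\<gamma>s us. length \<gamma>s = length us \<and> set \<gamma>s \<subseteq> Sset \<phi> \<and> set us \<subseteq> Tset \<phi> \<and>
     (\<forall>a a'. Atensor_eq \<phi> 2 [[a, a']]
        (concat (map2 (\<lambda>g u. map (\<lambda>x. [a * g a' * x ! 0, x ! 1]) u) \<gamma>s us))))"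

end

theory Submission
  imports Defs "HOL-Library.Multiset"
begin

text \<open>
  The evaluation map from \<open>S \<otimes>\<^sub>R \<dots> \<otimes>\<^sub>R S \<otimes>\<^sub>R \<E>\<close> to
  \<open>Hom(\<^sub>BA\<^sup>\<otimes>\<^sup>n, \<^sub>BA)\<close> is well defined because all factors are left \<open>B\<close>-linear
  and all but the last are right \<open>B\<close>-linear. A right D2 quasibase expands every left
  \<open>B\<close>-linear \<open>P : A \<rightarrow> A\<close> as \<open>P(a) = \<Sum>\<^sub>j \<gamma>\<^sub>j(a) u\<^sub>j\<^sup>1 P(u\<^sub>j\<^sup>2)\<close>
  (apply \<open>x \<otimes> y \<mapsto> x P(y)\<close> to \<open>1 \<otimes> a\<close>). Applied to the first slot of a hom \<open>F\<close>
  this gives \<open>F = \<Sum>\<^sub>j \<gamma>\<^sub>j \<otimes> u\<^sub>j\<^sup>1 F(u\<^sub>j\<^sup>2 \<otimes> -)\<close>, and recursion on the number of slots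
  produces a preimage of \<open>F\<close>: the map is surjective. For injectivity, this preimage of
  the image of a tensor \<open>\<Sum> f \<otimes> y\<close> is \<open>\<Sum>\<^sub>j \<gamma>\<^sub>j \<otimes> r\<^sub>j y\<close> with
  \<open>r\<^sub>j = u\<^sub>j\<^sup>1 f(u\<^sub>j\<^sup>2) \<in> R\<close>; moving \<open>r\<^sub>j\<close> across the tensor sign and using
  \<open>f = \<Sum>\<^sub>j \<gamma>\<^sub>j r\<^sub>j\<close> recovers the original tensor.
\<close>

section \<open>Balanced tensor products of formal sums\<close>

lemma tuples_Nil [simp]: "x \<in> tuples [] \<longleftrightarrow> x = []"
  unfolding tuples_def by auto

lemma Nil_in_tuples_iff [simp]: "[] \<in> tuples Ms \<longleftrightarrow> Ms = []"
  by (auto simp: tuples_def)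

lemma Cons_in_tuples_Cons [simp]: "g # y \<in> tuples (M # Ms) \<longleftrightarrow> g \<in> M \<and> y \<in> tuples Ms"
  unfolding tuples_def by (auto simp: nth_Cons split: nat.splits)

lemma tuples_length: "x \<in> tuples Ms \<Longrightarrow> length x = length Ms"
  by (simp add: tuples_def)

lemma tuples_nth: "x \<in> tuples Ms \<Longrightarrow> i < length Ms \<Longrightarrow> x ! i \<in> Ms ! i"
  by (simp add: tuples_def)

lemma tuples_update: "x \<in> tuples Ms \<Longrightarrow> v \<in> Ms ! i \<Longrightarrow> x[i := v] \<in> tuples Ms"
  by (cases "i < length x") (auto simp: tuples_def nth_list_update list_update_beyond)

lemma tuples_replicate_UNIV [simp]: "x \<in> tuples (replicate n UNIV) \<longleftrightarrow> length x = n"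
  unfolding tuples_def by auto

lemma tuples_UNIV_Cons_replicate [simp]: "x \<in> tuples (UNIV # replicate n UNIV) \<longleftrightarrow> length x = Suc n"
  using tuples_replicate_UNIV[of x "Suc n"] by simp

lemma tensor_eq_tuples:
  "tensor_eq Ms R ract lact l l' \<Longrightarrow> set l \<subseteq> tuples Ms \<and> set l' \<subseteq> tuples Ms"
  by (induction rule: tensor_eq.induct) auto

declare tensor_eq.trans [trans]

lemma tensor_eq_sum_list_map:
  fixes h :: "'x::ab_group_add list \<Rightarrow> 'y::comm_monoid_add"
  assumes "tensor_eq Ms R ract lact l l'"
    and add: "\<And>i x y. i < length Ms \<Longrightarrow> x \<in> tuples Ms \<Longrightarrow> y \<in> tuples Ms \<Longrightarrow>
      \<forall>j. j \<noteq> i \<longrightarrow> x ! j = y ! j \<Longrightarrow> h (x[i := x ! i + y ! i]) = h x + h y"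
    and zero: "\<And>i x. i < length Ms \<Longrightarrow> x \<in> tuples Ms \<Longrightarrow> x ! i = 0 \<Longrightarrow> h x = 0"
    and bal: "\<And>i x r. Suc i < length Ms \<Longrightarrow> x \<in> tuples Ms \<Longrightarrow> r \<in> R \<Longrightarrow>
      h (x[i := ract (x ! i) r]) = h (x[Suc i := lact r (x ! Suc i)])"
  shows "sum_list (map h l) = sum_list (map h l')"
  using assms(1) by induction (simp_all add: add zero bal add.commute)

lemma tensor_eq_map_Cons:
  assumes "tensor_eq Ms R ract lact t t'" and "g \<in> M"
  shows "tensor_eq (M # Ms) R ract lact (map ((#) g) t) (map ((#) g) t')"
  using assms(1)
proof induction
  case (refl l)
  then show ?case using assms(2) by (intro tensor_eq.refl) auto
next
  case (app l1 l2 l3 l4)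
  then show ?case using tensor_eq.app by fastforce
next
  case (swap x y)
  then show ?case using assms(2) by (auto intro: tensor_eq.swap)
next
  case (add i x y)
  have "tensor_eq (M # Ms) R ract lact [(g # x)[Suc i := (g # x) ! Suc i + (g # y) ! Suc i]] [g # x, g # y]"
    using add assms(2) by (intro tensor_eq.add) (auto simp: nth_Cons split: nat.splits)
  then show ?case by simp
next
  case (zero i x)
  have "tensor_eq (M # Ms) R ract lact [g # x] []"
    using zero assms(2) by (intro tensor_eq.zero[of "Suc i"]) auto
  then show ?case by simp
next
  case (bal i x r)
  have "tensor_eq (M # Ms) R ract lact [(g # x)[Suc i := ract ((g # x) ! Suc i) r]]
      [(g # x)[Suc (Suc i) := lact r ((g # x) ! Suc (Suc i))]]"
    using bal assms(2) by (intro tensor_eq.bal) auto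
  then show ?case by simp
qed (blast intro: tensor_eq.sym tensor_eq.trans)+

lemma tensor_eq_concat_map:
  assumes "\<And>p. p \<in> set ps \<Longrightarrow> tensor_eq Ms R ract lact (f p) (g p)"
  shows "tensor_eq Ms R ract lact (concat (map f ps)) (concat (map g ps))"
  using assms by (induction ps) (auto intro: tensor_eq.refl dest: tensor_eq.app)

lemma tensor_eq_map:
  assumes "\<And>p. p \<in> set ps \<Longrightarrow> tensor_eq Ms R ract lact [f p] [g p]"
  shows "tensor_eq Ms R ract lact (map f ps) (map g ps)"
  using tensor_eq_concat_map[of ps Ms R ract lact "\<lambda>p. [f p]" "\<lambda>p. [g p]"] assms
  by (simp add: map_concat[symmetric])

lemma tensor_eq_Cons_snoc:
  assumes "x \<in> tuples Ms" "set l \<subseteq> tuples Ms"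
  shows "tensor_eq Ms R ract lact (x # l) (l @ [x])"
  using assms(2)
proof (induction l)
  case Nil
  then show ?case using assms(1) by (auto intro: tensor_eq.refl)
next
  case (Cons y l)
  have "tensor_eq Ms R ract lact ([x, y] @ l) ([y, x] @ l)"
    using Cons assms(1) by (intro tensor_eq.app tensor_eq.swap tensor_eq.refl) auto
  moreover have "tensor_eq Ms R ract lact ([y] @ x # l) ([y] @ l @ [x])"
    using Cons by (intro tensor_eq.app tensor_eq.refl) auto
  ultimately show ?case by (auto intro: tensor_eq.trans)
qed

lemma tensor_eq_mset:
  assumes "set l \<subseteq> tuples Ms" "mset l = mset l'"
  shows "tensor_eq Ms R ract lact l l'"
  using assms
proof (induction l arbitrary: l')
  case Nil
  then show ?case by (auto intro: tensor_eq.refl)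
next
  case (Cons x l)
  then have "x \<in> set l'" by (metis list.set_intros(1) set_mset_mset)
  then obtain l1 l2 where l': "l' = l1 @ x # l2" by (meson split_list)
  with Cons.prems have l12: "mset l = mset (l1 @ l2)" by simp
  then have "set (l1 @ l2) \<subseteq> tuples Ms"
    using Cons.prems(1) by (metis mset_eq_setD set_subset_Cons subset_trans)
  have "tensor_eq Ms R ract lact ([x] @ l) ([x] @ l1 @ l2)"
    using Cons l12 by (intro tensor_eq.app tensor_eq.refl) auto
  moreover have "tensor_eq Ms R ract lact ((x # l1) @ l2) ((l1 @ [x]) @ l2)"
    using Cons.prems \<open>set (l1 @ l2) \<subseteq> tuples Ms\<close>
    by (intro tensor_eq.app tensor_eq_Cons_snoc tensor_eq.refl) auto
  ultimately show ?case using l' by (auto intro: tensor_eq.trans)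
qed

lemma tensor_eq_update_sum_list:
  assumes "x \<in> tuples Ms" "i < length Ms" "set vs \<subseteq> Ms ! i" "0 \<in> Ms ! i"
    and closed: "\<And>a b. a \<in> Ms ! i \<Longrightarrow> b \<in> Ms ! i \<Longrightarrow> a + b \<in> Ms ! i"
  shows "tensor_eq Ms R ract lact [x[i := sum_list vs]] (map (\<lambda>v. x[i := v]) vs)"
  using assms(3)
proof (induction vs)
  case Nil
  then show ?case using assms by (auto intro!: tensor_eq.zero tuples_update simp: tuples_length)
next
  case (Cons v vs)
  have "sum_list vs \<in> Ms ! i" using Cons.prems assms(4) closed by (induction vs) auto
  then have "tensor_eq Ms R ract lact [(x[i := v])[i := x[i := v] ! i + x[i := sum_list vs] ! i]]
      [x[i := v], x[i := sum_list vs]]"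
    using assms Cons.prems closed
    by (intro tensor_eq.add) (auto intro: tuples_update simp: tuples_length nth_list_update)
  then have "tensor_eq Ms R ract lact [x[i := v + sum_list vs]] [x[i := v], x[i := sum_list vs]]"
    using assms(1,2) by (simp add: tuples_length)
  moreover have "tensor_eq Ms R ract lact ([x[i := v]] @ [x[i := sum_list vs]]) ([x[i := v]] @ map (\<lambda>v. x[i := v]) vs)"
    using Cons assms(1) by (intro tensor_eq.app tensor_eq.refl) (auto intro: tuples_update)
  ultimately show ?case by (auto intro: tensor_eq.trans)
qed

section \<open>Evaluating formal tensors of maps\<close>

lemma sum_list_map_swap:
  fixes f :: "'x \<Rightarrow> 'y \<Rightarrow> 'z::comm_monoid_add"
  shows "(\<Sum>x\<leftarrow>xs. \<Sum>y\<leftarrow>ys. f x y) = (\<Sum>y\<leftarrow>ys. \<Sum>x\<leftarrow>xs. f x y)"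
  by (induction xs) (simp_all add: sum_list_addf)

lemma sum_list_map_concat: "sum_list (map f (concat xss)) = (\<Sum>xs\<leftarrow>xss. sum_list (map f xs))"
  by (induction xss) auto

lemma sum_list_fun_apply: "sum_list fs a = (\<Sum>f\<leftarrow>fs. f a)"
  by (induction fs) auto

lemma mset_map_conv_sum_list: "mset (map f xs) = (\<Sum>x\<leftarrow>xs. {#f x#})"
  by (induction xs) auto

lemma mset_concat_map_swap:
  "mset (concat (map (\<lambda>p. map (f p) ys) ps)) = mset (concat (map (\<lambda>y. map (\<lambda>p. f p y) ps) ys))"
  unfolding mset_concat map_map o_def mset_map_conv_sum_list by (rule sum_list_map_swap)

lemma prod_list_update_add:
  fixes xs :: "'a::semiring_1 list"
  shows "i < length xs \<Longrightarrow> prod_list (xs[i := a + b]) = prod_list (xs[i := a]) + prod_list (xs[i := b])"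
proof (induction xs arbitrary: i)
  case (Cons c xs)
  then show ?case by (cases i) (simp_all add: distrib_left distrib_right)
qed simp

lemma prod_list_update_balance:
  fixes xs :: "'a::monoid_mult list"
  shows "Suc i < length xs \<Longrightarrow> prod_list (xs[i := xs ! i * r]) = prod_list (xs[Suc i := r * xs ! Suc i])"
proof (induction xs arbitrary: i)
  case (Cons c xs)
  then show ?case by (cases i; cases xs) (auto simp: mult.assoc)
qed simp

lemma prod_list_zero:
  fixes xs :: "'a::semiring_1 list"
  shows "0 \<in> set xs \<Longrightarrow> prod_list xs = 0"
  by (induction xs) auto

definition prod_apply :: "('a::ring_1 \<Rightarrow> 'a) list \<Rightarrow> 'a list \<Rightarrow> 'a" where
  "prod_apply fs xs = prod_list (map2 (\<lambda>f a. f a) fs xs)"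

lemma prod_apply_Nil [simp]: "prod_apply [] xs = 1"
  by (simp add: prod_apply_def)

lemma prod_apply_Cons [simp]: "prod_apply (f # fs) (a # xs) = f a * prod_apply fs xs"
  by (simp add: prod_apply_def)

lemma prod_apply_update_arg:
  "length fs = length xs \<Longrightarrow>
    prod_apply fs (xs[i := a]) = prod_list ((map2 (\<lambda>f a. f a) fs xs)[i := (fs ! i) a])"
  unfolding prod_apply_def
  by (cases "i < length xs"; intro arg_cong[where f = prod_list] nth_equalityI)
    (auto simp: nth_list_update list_update_beyond)

lemma prod_apply_update_fun:
  "length fs = length xs \<Longrightarrow>
    prod_apply (fs[i := g]) xs = prod_list ((map2 (\<lambda>f a. f a) fs xs)[i := g (xs ! i)])"
  unfolding prod_apply_def
  by (cases "i < length xs"; intro arg_cong[where f = prod_list] nth_equalityI)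
    (auto simp: nth_list_update list_update_beyond)

lemma list_update_nth_eq:
  "length ys = length xs \<Longrightarrow> \<forall>j. j \<noteq> i \<longrightarrow> xs ! j = ys ! j \<Longrightarrow> ys = xs[i := ys ! i]"
  by (cases "i < length xs"; rule nth_equalityI) (auto simp: nth_list_update list_update_beyond)

lemma prod_apply_add_arg:
  assumes "length fs = length xs" "length ys = length xs" "i < length xs"
    and "\<forall>j. j \<noteq> i \<longrightarrow> xs ! j = ys ! j" and "additive (fs ! i)"
  shows "prod_apply fs (xs[i := xs ! i + ys ! i]) = prod_apply fs xs + prod_apply fs ys"
proof -
  let ?m = "map2 (\<lambda>f a. f a) fs xs"
  have "prod_apply fs (xs[i := xs ! i + ys ! i]) = prod_list (?m[i := (fs ! i) (xs ! i) + (fs ! i) (ys ! i)])"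
    using assms(1,5) by (simp add: prod_apply_update_arg additive_def)
  also have "\<dots> = prod_apply fs (xs[i := xs ! i]) + prod_apply fs (xs[i := ys ! i])"
    unfolding prod_apply_update_arg[OF assms(1)] using assms(1,3) by (intro prod_list_update_add) simp
  also have "\<dots> = prod_apply fs xs + prod_apply fs ys"
    by (simp add: list_update_nth_eq[OF assms(2,4), symmetric])
  finally show ?thesis .
qed

lemma prod_apply_add_fun:
  assumes "length fs = length xs" "length gs = length xs" "i < length xs"
    and "\<forall>j. j \<noteq> i \<longrightarrow> fs ! j = gs ! j"
  shows "prod_apply (fs[i := fs ! i + gs ! i]) xs = prod_apply fs xs + prod_apply gs xs"
proof -
  let ?m = "map2 (\<lambda>f a. f a) fs xs"
  have "prod_apply (fs[i := fs ! i + gs ! i]) xs = prod_list (?m[i := (fs ! i) (xs ! i) + (gs ! i) (xs ! i)])"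
    using assms(1) by (simp add: prod_apply_update_fun)
  also have "\<dots> = prod_apply (fs[i := fs ! i]) xs + prod_apply (fs[i := gs ! i]) xs"
    unfolding prod_apply_update_fun[OF assms(1)] using assms(1,3) by (intro prod_list_update_add) simp
  also have "\<dots> = prod_apply fs xs + prod_apply gs xs"
    using list_update_nth_eq[of gs fs i] assms(1,2,4) by (simp add: HOL.eq_commute[of gs])
  finally show ?thesis .
qed

lemma prod_apply_zero_arg:
  assumes "length fs = length xs" "i < length xs" "xs ! i = 0" "additive (fs ! i)"
  shows "prod_apply fs xs = 0"
proof -
  have "(fs ! i) (xs ! i) = 0"
    using assms(3,4) unfolding additive_def by (metis add_cancel_right_right)
  then have "0 \<in> set (map2 (\<lambda>f a. f a) fs xs)"
    using assms(1,2) by (force simp: in_set_conv_nth)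
  then show ?thesis unfolding prod_apply_def by (rule prod_list_zero)
qed

lemma prod_apply_zero_fun:
  assumes "length fs = length xs" "i < length xs" "fs ! i = 0"
  shows "prod_apply fs xs = 0"
proof -
  have "0 \<in> set (map2 (\<lambda>f a. f a) fs xs)"
    using assms by (force simp: in_set_conv_nth)
  then show ?thesis unfolding prod_apply_def by (rule prod_list_zero)
qed

lemma prod_apply_balance_arg:
  assumes "length fs = length xs" "Suc i < length xs"
    and "\<And>z. (fs ! i) (z * c) = (fs ! i) z * c" "\<And>z. (fs ! Suc i) (c * z) = c * (fs ! Suc i) z"
  shows "prod_apply fs (xs[i := xs ! i * c]) = prod_apply fs (xs[Suc i := c * xs ! Suc i])"
  using assms prod_list_update_balance[of i "map2 (\<lambda>f a. f a) fs xs" c]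
  by (simp add: prod_apply_update_arg)

lemma prod_apply_balance_fun:
  assumes "length fs = length xs" "Suc i < length xs"
  shows "prod_apply (fs[i := ractF (fs ! i) r]) xs = prod_apply (fs[Suc i := lactF r (fs ! Suc i)]) xs"
  using assms prod_list_update_balance[of i "map2 (\<lambda>f a. f a) fs xs" r]
  by (simp add: prod_apply_update_fun ractF_def lactF_def)

lemma prod_apply_lactF_first:
  "fs \<noteq> [] \<Longrightarrow> xs \<noteq> [] \<Longrightarrow> prod_apply (fs[0 := lactF r (fs ! 0)]) xs = r * prod_apply fs xs"
  by (cases fs; cases xs) (simp_all add: lactF_def mult.assoc)

lemma eval_tensor_conv_sum_list: "eval_tensor t l = (\<Sum>x\<leftarrow>l. \<Sum>y\<leftarrow>t. prod_apply y x)"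
  unfolding eval_tensor_def prod_apply_def by (induction l) auto

lemma eval_tensor_conv_sum_list': "eval_tensor t l = (\<Sum>y\<leftarrow>t. \<Sum>x\<leftarrow>l. prod_apply y x)"
  unfolding eval_tensor_conv_sum_list by (rule sum_list_map_swap)

lemma eval_tensor_append: "eval_tensor t (l @ l') = eval_tensor t l + eval_tensor t l'"
  by (simp add: eval_tensor_conv_sum_list)

lemma eval_tensor_singleton: "eval_tensor t [x] = (\<Sum>y\<leftarrow>t. prod_apply y x)"
  by (simp add: eval_tensor_conv_sum_list)

lemma Eset_iff: "f \<in> Eset \<phi> \<longleftrightarrow> (\<forall>x y. f (x + y) = f x + f y) \<and> (\<forall>b x. f (\<phi> b * x) = \<phi> b * f x)"
  by (simp add: Eset_def additive_def)

lemma Sset_iff: "f \<in> Sset \<phi> \<longleftrightarrow> f \<in> Eset \<phi> \<and> (\<forall>b x. f (x * \<phi> b) = f x * \<phi> b)"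
  by (auto simp: Sset_def Eset_def)

lemma Sset_subset_Eset: "Sset \<phi> \<subseteq> Eset \<phi>"
  by (auto simp: Sset_iff)

lemma zero_in_Eset: "0 \<in> Eset \<phi>"
  by (simp add: Eset_iff)

lemma zero_in_Sset: "0 \<in> Sset \<phi>"
  by (simp add: Sset_iff zero_in_Eset)

lemma add_in_Eset: "f \<in> Eset \<phi> \<Longrightarrow> g \<in> Eset \<phi> \<Longrightarrow> f + g \<in> Eset \<phi>"
  by (simp add: Eset_iff algebra_simps)

lemma add_in_Sset: "f \<in> Sset \<phi> \<Longrightarrow> g \<in> Sset \<phi> \<Longrightarrow> f + g \<in> Sset \<phi>"
  by (simp add: Sset_iff add_in_Eset algebra_simps)

lemma lactF_in_Eset: "r \<in> Rset \<phi> \<Longrightarrow> f \<in> Eset \<phi> \<Longrightarrow> lactF r f \<in> Eset \<phi>"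
  by (simp add: Eset_iff Rset_def lactF_def algebra_simps flip: mult.assoc)

lemma lactF_in_Sset: "r \<in> Rset \<phi> \<Longrightarrow> f \<in> Sset \<phi> \<Longrightarrow> lactF r f \<in> Sset \<phi>"
  using lactF_in_Eset[of r \<phi> f] by (simp add: Sset_iff lactF_def mult.assoc)

lemma ractF_in_Sset: "r \<in> Rset \<phi> \<Longrightarrow> f \<in> Sset \<phi> \<Longrightarrow> ractF f r \<in> Sset \<phi>"
  by (simp add: Sset_iff Eset_iff Rset_def ractF_def algebra_simps)

definition SE_list :: "('b::ring_1 \<Rightarrow> 'a::ring_1) \<Rightarrow> nat \<Rightarrow> ('a \<Rightarrow> 'a) set list" where
  "SE_list \<phi> k = replicate k (Sset \<phi>) @ [Eset \<phi>]"

lemma length_SE_list [simp]: "length (SE_list \<phi> k) = Suc k"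
  by (simp add: SE_list_def)

lemma SE_list_0: "SE_list \<phi> 0 = [Eset \<phi>]"
  by (simp add: SE_list_def)

lemma SE_list_Suc: "SE_list \<phi> (Suc k) = Sset \<phi> # SE_list \<phi> k"
  by (simp add: SE_list_def)

lemma nth_SE_list: "i < Suc k \<Longrightarrow> SE_list \<phi> k ! i = (if i < k then Sset \<phi> else Eset \<phi>)"
  by (simp add: SE_list_def nth_append)

lemma SE_list_not_Nil [simp]: "SE_list \<phi> k \<noteq> []"
  by (simp add: SE_list_def)

lemma SE_list_subset_Eset: "i < Suc k \<Longrightarrow> SE_list \<phi> k ! i \<subseteq> Eset \<phi>"
  using Sset_subset_Eset[of \<phi>] by (simp add: nth_SE_list)

lemma lactF_in_SE_list: "i < Suc k \<Longrightarrow> r \<in> Rset \<phi> \<Longrightarrow> f \<in> SE_list \<phi> k ! i \<Longrightarrow> lactF r f \<in> SE_list \<phi> k ! i"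
  by (simp add: nth_SE_list lactF_in_Sset lactF_in_Eset split: if_splits)

lemma lactF_first_in_tuples:
  "r \<in> Rset \<phi> \<Longrightarrow> fs \<in> tuples (SE_list \<phi> k) \<Longrightarrow> fs[0 := lactF r (fs ! 0)] \<in> tuples (SE_list \<phi> k)"
  by (intro tuples_update lactF_in_SE_list tuples_nth) auto

lemma in_tuples_SE_listD:
  assumes "y \<in> tuples (SE_list \<phi> k)"
  shows "length y = Suc k" and "i < Suc k \<Longrightarrow> y ! i \<in> Eset \<phi>" and "i < k \<Longrightarrow> y ! i \<in> Sset \<phi>"
proof -
  show "length y = Suc k" using tuples_length[OF assms] by simp
  show "i < Suc k \<Longrightarrow> y ! i \<in> Eset \<phi>"
    using tuples_nth[OF assms] SE_list_subset_Eset by fastforce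
  show "i < k \<Longrightarrow> y ! i \<in> Sset \<phi>"
    using tuples_nth[OF assms, of i] by (simp add: nth_SE_list)
qed

section \<open>Well-definedness of the evaluation map\<close>

lemma eval_tensor_Atensor_eq:
  fixes \<phi> :: "'b::ring_1 \<Rightarrow> 'a::ring_1"
  assumes t: "set t \<subseteq> tuples (SE_list \<phi> k)" and e: "Atensor_eq \<phi> (Suc k) l l'"
  shows "eval_tensor t l = eval_tensor t l'"
proof -
  note y = in_tuples_SE_listD[OF subsetD[OF t]]
  show ?thesis
    unfolding eval_tensor_conv_sum_list
  proof (rule tensor_eq_sum_list_map[OF e])
    fix i and x x' :: "'a list"
    assume "i < length (replicate (Suc k) (UNIV :: 'a set))" "x \<in> Atuples (Suc k)" "x' \<in> Atuples (Suc k)"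
      "\<forall>j. j \<noteq> i \<longrightarrow> x ! j = x' ! j"
    then have "prod_apply y (x[i := x ! i + x' ! i]) = prod_apply y x + prod_apply y x'" if "y \<in> set t" for y
      using y[OF that] by (intro prod_apply_add_arg) (auto simp: Eset_def)
    then show "(\<Sum>y\<leftarrow>t. prod_apply y (x[i := x ! i + x' ! i])) = (\<Sum>y\<leftarrow>t. prod_apply y x) + (\<Sum>y\<leftarrow>t. prod_apply y x')"
      by (simp add: sum_list_addf[symmetric] cong: map_cong)
  next
    fix i and x :: "'a list"
    assume "i < length (replicate (Suc k) (UNIV :: 'a set))" "x \<in> Atuples (Suc k)" "x ! i = 0"
    then have "prod_apply y x = 0" if "y \<in> set t" for y
      using y[OF that] by (intro prod_apply_zero_arg[of y x i]) (auto simp: Eset_def)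
    then show "(\<Sum>y\<leftarrow>t. prod_apply y x) = 0"
      by (simp cong: map_cong)
  next
    fix i and x :: "'a list" and r
    assume "Suc i < length (replicate (Suc k) (UNIV :: 'a set))" "x \<in> Atuples (Suc k)" "r \<in> range \<phi>"
    then have "prod_apply y (x[i := x ! i * r]) = prod_apply y (x[Suc i := r * x ! Suc i])" if "y \<in> set t" for y
      using y[OF that] by (intro prod_apply_balance_arg) (auto simp: Sset_iff Eset_iff)
    then show "(\<Sum>y\<leftarrow>t. prod_apply y (x[i := x ! i * r])) = (\<Sum>y\<leftarrow>t. prod_apply y (x[Suc i := r * x ! Suc i]))"
      by (simp cong: map_cong)
  qed
qed

lemma eval_tensor_in_AT_hom:
  fixes \<phi> :: "'b::ring_1 \<Rightarrow> 'a::ring_1"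
  assumes t: "set t \<subseteq> tuples (SE_list \<phi> k)"
  shows "eval_tensor t \<in> AT_hom \<phi> (Suc k)"
proof -
  note y = in_tuples_SE_listD[OF subsetD[OF t]]
  have "eval_tensor t (map (\<lambda>x. x[0 := \<phi> b * x ! 0]) l) = \<phi> b * eval_tensor t l"
    if "set l \<subseteq> Atuples (Suc k)" for b l
  proof -
    have "prod_apply y (x[0 := \<phi> b * x ! 0]) = \<phi> b * prod_apply y x" if "x \<in> set l" "y \<in> set t" for x y
      using \<open>set l \<subseteq> Atuples (Suc k)\<close> y(1)[OF that(2)] y(2)[OF that(2), of 0] that(1)
      by (cases x; cases y) (auto simp: Eset_iff mult.assoc)
    then show ?thesis unfolding eval_tensor_conv_sum_list
      by (simp add: sum_list_const_mult[symmetric] o_def cong: map_cong)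
  qed
  then show ?thesis
    unfolding AT_hom_def using eval_tensor_Atensor_eq[OF t] eval_tensor_append by blast
qed

lemma eval_tensor_tensor_eq:
  fixes \<phi> :: "'b::ring_1 \<Rightarrow> 'a::ring_1"
  assumes e: "tensor_eq (SE_list \<phi> k) (Rset \<phi>) ractF lactF t t'" and l: "set l \<subseteq> Atuples (Suc k)"
  shows "eval_tensor t l = eval_tensor t' l"
proof -
  have len: "x \<in> set l \<Longrightarrow> length x = Suc k" for x using l by auto
  show ?thesis
    unfolding eval_tensor_conv_sum_list'
  proof (rule tensor_eq_sum_list_map[OF e])
    fix i y y'
    assume "i < length (SE_list \<phi> k)" "y \<in> tuples (SE_list \<phi> k)" "y' \<in> tuples (SE_list \<phi> k)"
      "\<forall>j. j \<noteq> i \<longrightarrow> y ! j = y' ! j"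
    then have "prod_apply (y[i := y ! i + y' ! i]) x = prod_apply y x + prod_apply y' x" if "x \<in> set l" for x
      using len[OF that] by (intro prod_apply_add_fun) (auto simp: tuples_length)
    then show "(\<Sum>x\<leftarrow>l. prod_apply (y[i := y ! i + y' ! i]) x) = (\<Sum>x\<leftarrow>l. prod_apply y x) + (\<Sum>x\<leftarrow>l. prod_apply y' x)"
      by (simp add: sum_list_addf[symmetric] cong: map_cong)
  next
    fix i y
    assume "i < length (SE_list \<phi> k)" "y \<in> tuples (SE_list \<phi> k)" "y ! i = 0"
    then have "prod_apply y x = 0" if "x \<in> set l" for x
      using len[OF that] by (intro prod_apply_zero_fun[of y x i]) (auto simp: tuples_length)
    then show "(\<Sum>x\<leftarrow>l. prod_apply y x) = 0"
      by (simp cong: map_cong)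
  next
    fix i y r
    assume "Suc i < length (SE_list \<phi> k)" "y \<in> tuples (SE_list \<phi> k)"
    then have "prod_apply (y[i := ractF (y ! i) r]) x = prod_apply (y[Suc i := lactF r (y ! Suc i)]) x"
      if "x \<in> set l" for x
      using len[OF that] by (intro prod_apply_balance_fun) (auto simp: tuples_length)
    then show "(\<Sum>x\<leftarrow>l. prod_apply (y[i := ractF (y ! i) r]) x) = (\<Sum>x\<leftarrow>l. prod_apply (y[Suc i := lactF r (y ! Suc i)]) x)"
      by (simp cong: map_cong)
  qed
qed

lemma
  assumes "F \<in> AT_hom \<phi> n"
  shows AT_hom_resp: "Atensor_eq \<phi> n l l' \<Longrightarrow> F l = F l'"
    and AT_hom_append: "set l \<subseteq> Atuples n \<Longrightarrow> set l' \<subseteq> Atuples n \<Longrightarrow> F (l @ l') = F l + F l'"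
    and AT_hom_lmult: "set l \<subseteq> Atuples n \<Longrightarrow> F (map (\<lambda>x. x[0 := \<phi> b * x ! 0]) l) = \<phi> b * F l"
  using assms unfolding AT_hom_def by blast+

lemma AT_hom_Nil: "F \<in> AT_hom \<phi> n \<Longrightarrow> F [] = 0"
  using AT_hom_append[of F \<phi> n "[]" "[]"] by simp

lemma AT_hom_conv_sum_list:
  assumes "F \<in> AT_hom \<phi> n" "set l \<subseteq> Atuples n"
  shows "F l = (\<Sum>x\<leftarrow>l. F [x])"
  using assms(2)
proof (induction l)
  case (Cons x l)
  then show ?case using AT_hom_append[OF assms(1), of "[x]" l] by simp
qed (simp add: AT_hom_Nil[OF assms(1)])

lemma AT_hom_Cons_resp:
  assumes "F \<in> AT_hom \<phi> (Suc n)" "Atensor_eq \<phi> n l l'"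
  shows "F (map ((#) a) l) = F (map ((#) a) l')"
  using AT_hom_resp[OF assms(1)] tensor_eq_map_Cons[OF assms(2), of a UNIV] by simp

lemma AT_hom_first_slot_in_Eset:
  assumes F: "F \<in> AT_hom \<phi> (Suc n)" and z: "length z = n"
  shows "(\<lambda>y. F [y # z]) \<in> Eset \<phi>"
proof -
  have "Atensor_eq \<phi> (Suc n) [(y # z)[0 := (y # z) ! 0 + (y' # z) ! 0]] [y # z, y' # z]" for y y'
    using z by (intro tensor_eq.add) (auto simp: nth_Cons split: nat.split)
  then have "F [(y + y') # z] = F ([y # z] @ [y' # z])" for y y'
    using AT_hom_resp[OF F] by simp
  moreover have "F [(\<phi> b * y) # z] = \<phi> b * F [y # z]" for b y
    using AT_hom_lmult[OF F, of "[y # z]" b] z by simp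
  moreover have "F ([y # z] @ [y' # z]) = F [y # z] + F [y' # z]" for y y'
    using z by (intro AT_hom_append[OF F]) auto
  ultimately show ?thesis by (simp add: Eset_iff)
qed

section \<open>Contraction with elements of \<open>T\<close>\<close>

text \<open>\<open>contract w P\<close> is \<open>w\<^sup>1 P(w\<^sup>2)\<close> in Sweedler notation.\<close>

definition contract :: "'a::ring_1 list list \<Rightarrow> ('a \<Rightarrow> 'a) \<Rightarrow> 'a" where
  "contract w P = (\<Sum>x\<leftarrow>w. x ! 0 * P (x ! 1))"

lemma contract_sum_list: "contract w (\<lambda>y. \<Sum>z\<leftarrow>zs. P z y) = (\<Sum>z\<leftarrow>zs. contract w (P z))"
proof -
  have "contract w (\<lambda>y. \<Sum>z\<leftarrow>zs. P z y) = (\<Sum>x\<leftarrow>w. \<Sum>z\<leftarrow>zs. x ! 0 * P z (x ! 1))"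
    unfolding contract_def by (simp add: sum_list_const_mult)
  also have "\<dots> = (\<Sum>z\<leftarrow>zs. contract w (P z))"
    unfolding contract_def by (rule sum_list_map_swap)
  finally show ?thesis .
qed

lemma contract_mult_right: "contract w (\<lambda>y. P y * c) = contract w P * c"
  unfolding contract_def by (simp add: sum_list_mult_const[symmetric] mult.assoc)

lemma contract_Atensor_eq:
  fixes \<phi> :: "'b::ring_1 \<Rightarrow> 'a::ring_1"
  assumes P: "P \<in> Eset \<phi>" and e: "Atensor_eq \<phi> 2 w w'"
  shows "contract w P = contract w' P"
  unfolding contract_def
proof (rule tensor_eq_sum_list_map[OF e])
  fix i and x y :: "'a list"
  assume "i < length (replicate 2 (UNIV :: 'a set))" "x \<in> Atuples 2" "y \<in> Atuples 2"
    and agree: "\<forall>j. j \<noteq> i \<longrightarrow> x ! j = y ! j"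
  then have "length x = 2" "length y = 2" "i < 2" by simp_all
  then obtain a b c d where "x = [a, b]" "y = [c, d]" "i = 0 \<or> i = 1"
    by (auto simp: numeral_2_eq_2 length_Suc_conv less_Suc_eq)
  with agree P show "x[i := x ! i + y ! i] ! 0 * P (x[i := x ! i + y ! i] ! 1) = x ! 0 * P (x ! 1) + y ! 0 * P (y ! 1)"
    by (auto simp: Eset_iff distrib_left distrib_right)
next
  fix i and x :: "'a list"
  assume "i < length (replicate 2 (UNIV :: 'a set))" "x \<in> Atuples 2" and "x ! i = 0"
  then have "i = 0 \<or> i = 1" by auto
  moreover have "P 0 = 0"
    using P by (metis Eset_iff add_cancel_right_right)
  ultimately show "x ! 0 * P (x ! 1) = 0"
    using \<open>x ! i = 0\<close> by auto
next
  fix i and x :: "'a list" and r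
  assume "Suc i < length (replicate 2 (UNIV :: 'a set))" "x \<in> Atuples 2" "r \<in> range \<phi>"
  then have "length x = 2" "i = 0" "r \<in> range \<phi>" by simp_all
  then obtain a b b' where "x = [a, b]" "i = 0" "r = \<phi> b'"
    by (auto simp: numeral_2_eq_2 length_Suc_conv)
  with P show "x[i := x ! i * r] ! 0 * P (x[i := x ! i * r] ! 1) =
      x[Suc i := r * x ! Suc i] ! 0 * P (x[Suc i := r * x ! Suc i] ! 1)"
    by (simp add: Eset_iff mult.assoc)
qed

lemma contract_Tset:
  assumes "u \<in> Tset \<phi>" "P \<in> Eset \<phi>"
  shows "\<phi> b * contract u P = contract u (\<lambda>y. P (y * \<phi> b))"
  using contract_Atensor_eq[OF assms(2), of "map (\<lambda>x. [\<phi> b * x ! 0, x ! 1]) u" "map (\<lambda>x. [x ! 0, x ! 1 * \<phi> b]) u"]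
    assms(1)
  by (simp add: Tset_def contract_def o_def sum_list_const_mult[symmetric] mult.assoc)

lemma contract_in_Rset:
  assumes "u \<in> Tset \<phi>" "\<alpha> \<in> Sset \<phi>"
  shows "contract u \<alpha> \<in> Rset \<phi>"
  using contract_Tset[OF assms(1) subsetD[OF Sset_subset_Eset assms(2)]] assms(2)
  by (simp add: Rset_def Sset_iff contract_mult_right)

text \<open>\<open>contract_first u F = u\<^sup>1 F(u\<^sup>2 \<otimes> -)\<close>, one tensor factor fewer than \<open>F\<close>.\<close>

definition contract_first :: "'a::ring_1 list list \<Rightarrow> ('a list list \<Rightarrow> 'a) \<Rightarrow> 'a list list \<Rightarrow> 'a" where
  "contract_first u F l = (\<Sum>z\<leftarrow>l. contract u (\<lambda>y. F [y # z]))"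

lemma contract_first_append: "contract_first u F (l @ l') = contract_first u F l + contract_first u F l'"
  by (simp add: contract_first_def)

lemma contract_first_conv_contract:
  assumes "F \<in> AT_hom \<phi> (Suc n)" "set l \<subseteq> Atuples n"
  shows "contract_first u F l = contract u (\<lambda>y. F (map ((#) y) l))"
proof -
  have "set (map ((#) y) l) \<subseteq> Atuples (Suc n)" for y
    using assms(2) by auto
  then have "F (map ((#) y) l) = (\<Sum>z\<leftarrow>l. F [y # z])" for y
    using AT_hom_conv_sum_list[OF assms(1)] by (simp add: o_def)
  then show ?thesis by (simp add: contract_first_def contract_sum_list)
qed

lemma contract_first_in_AT_hom:
  assumes u: "u \<in> Tset \<phi>" and F: "F \<in> AT_hom \<phi> (Suc (Suc k))"
  shows "contract_first u F \<in> AT_hom \<phi> (Suc k)"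
proof -
  have "contract_first u F l = contract_first u F l'" if "Atensor_eq \<phi> (Suc k) l l'" for l l'
    using that tensor_eq_tuples[OF that] AT_hom_Cons_resp[OF F that]
    by (simp add: contract_first_conv_contract[OF F])
  moreover have "contract_first u F (map (\<lambda>x. x[0 := \<phi> b * x ! 0]) l) = \<phi> b * contract_first u F l"
    if "set l \<subseteq> Atuples (Suc k)" for b l
  proof -
    have "contract u (\<lambda>y. F [y # z[0 := \<phi> b * z ! 0]]) = \<phi> b * contract u (\<lambda>y. F [y # z])"
      if "length z = Suc k" for z
    proof -
      have "Atensor_eq \<phi> (Suc (Suc k)) [(y # z)[0 := (y # z) ! 0 * \<phi> b]]
          [(y # z)[Suc 0 := \<phi> b * (y # z) ! Suc 0]]" for y
        using that by (intro tensor_eq.bal) auto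
      then have "F [(y * \<phi> b) # z] = F [y # z[0 := \<phi> b * z ! 0]]" for y
        using AT_hom_resp[OF F] by simp
      then show ?thesis
        using contract_Tset[OF u AT_hom_first_slot_in_Eset[OF F that]] by simp
    qed
    with that show ?thesis
      by (auto simp: contract_first_def sum_list_const_mult[symmetric] o_def subset_iff cong: map_cong)
  qed
  ultimately show ?thesis
    unfolding AT_hom_def by (blast intro: contract_first_append)
qed

text \<open>For \<open>t = \<Sum> f \<otimes> y\<close>, \<open>push_contract u t = \<Sum> r\<^sub>f y\<close> with \<open>r\<^sub>f = u\<^sup>1 f(u\<^sup>2)\<close>
  multiplied onto the first factor of \<open>y\<close>.\<close>

definition push_contract :: "'a::ring_1 list list \<Rightarrow> ('a \<Rightarrow> 'a) list list \<Rightarrow> ('a \<Rightarrow> 'a) list list" where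
  "push_contract u t = map (\<lambda>y. (tl y)[0 := lactF (contract u (hd y)) (tl y ! 0)]) t"

lemma push_contract_tuples:
  assumes "u \<in> Tset \<phi>" "set t \<subseteq> tuples (SE_list \<phi> (Suc k))"
  shows "set (push_contract u t) \<subseteq> tuples (SE_list \<phi> k)"
proof (clarsimp simp: push_contract_def)
  fix y assume "y \<in> set t"
  then have "y \<in> tuples (Sset \<phi> # SE_list \<phi> k)"
    using assms(2) by (auto simp: SE_list_Suc)
  then obtain f fs where "y = f # fs" "f \<in> Sset \<phi>" "fs \<in> tuples (SE_list \<phi> k)"
    by (cases y) auto
  then show "(tl y)[0 := lactF (contract u (hd y)) (tl y ! 0)] \<in> tuples (SE_list \<phi> k)"
    using contract_in_Rset[OF assms(1)] by (simp add: lactF_first_in_tuples)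
qed

lemma tensor_eq_balance_contract:
  assumes "g \<in> Sset \<phi>" "u \<in> Tset \<phi>" "f \<in> Sset \<phi>" "fs \<in> tuples (SE_list \<phi> k)"
  shows "tensor_eq (SE_list \<phi> (Suc k)) (Rset \<phi>) ractF lactF
    [g # fs[0 := lactF (contract u f) (fs ! 0)]] [ractF g (contract u f) # fs]"
proof -
  let ?r = "contract u f"
  have "?r \<in> Rset \<phi>" using contract_in_Rset assms(2,3) .
  then have bal: "tensor_eq (SE_list \<phi> (Suc k)) (Rset \<phi>) ractF lactF [(g # fs)[0 := ractF ((g # fs) ! 0) ?r]]
      [(g # fs)[Suc 0 := lactF ?r ((g # fs) ! Suc 0)]]"
    using assms by (intro tensor_eq.bal) (simp_all add: SE_list_Suc ractF_in_Sset lactF_first_in_tuples)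
  obtain f' fs' where "fs = f' # fs'"
    using tuples_length[OF assms(4)] by (cases fs) auto
  then show ?thesis
    using tensor_eq.sym[OF bal] by simp
qed

lemma contract_first_eval_tensor:
  assumes t: "set t \<subseteq> tuples (SE_list \<phi> (Suc k))" and z: "length z = Suc k"
  shows "contract_first u (eval_tensor t) [z] = eval_tensor (push_contract u t) [z]"
proof -
  have y: "y \<noteq> []" "tl y \<noteq> []" if "y \<in> set t" for y
    using tuples_length[OF subsetD[OF t that]] by (cases y; auto)+
  have "z \<noteq> []" using z by auto
  have "prod_apply y (a # z) = hd y a * prod_apply (tl y) z" if "y \<in> set t" for y a
    using y(1)[OF that] by (cases y) auto
  then have "contract_first u (eval_tensor t) [z] = contract u (\<lambda>a. \<Sum>y\<leftarrow>t. hd y a * prod_apply (tl y) z)"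
    by (simp add: contract_first_def eval_tensor_singleton cong: map_cong)
  also have "\<dots> = (\<Sum>y\<leftarrow>t. contract u (hd y) * prod_apply (tl y) z)"
    by (simp add: contract_sum_list contract_mult_right)
  also have "\<dots> = eval_tensor (push_contract u t) [z]"
    using y(2) \<open>z \<noteq> []\<close> by (auto simp: eval_tensor_singleton push_contract_def prod_apply_lactF_first
        intro!: arg_cong[where f = sum_list] map_cong)
  finally show ?thesis .
qed

section \<open>Right D2 quasibases\<close>

locale right_D2_quasibase =
  fixes \<phi> :: "'b::ring_1 \<Rightarrow> 'a::ring_1" and gs :: "('a \<Rightarrow> 'a) list" and us :: "'a list list list"
  assumes gs_in_Sset: "set gs \<subseteq> Sset \<phi>"
    and us_in_Tset: "set us \<subseteq> Tset \<phi>"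
    and quasibase: "\<And>a a'. Atensor_eq \<phi> 2 [[a, a']]
      (concat (map2 (\<lambda>g u. map (\<lambda>x. [a * g a' * x ! 0, x ! 1]) u) gs us))"
begin

lemma in_set_zipD: "(g, u) \<in> set (zip gs us) \<Longrightarrow> g \<in> Sset \<phi> \<and> u \<in> Tset \<phi>"
  using gs_in_Sset us_in_Tset by (auto dest: set_zip_leftD set_zip_rightD)

lemma Eset_expansion:
  assumes "P \<in> Eset \<phi>"
  shows "P a = (\<Sum>(g, u)\<leftarrow>zip gs us. g a * contract u P)"
proof -
  have "P a = contract [[1, a]] P"
    by (simp add: contract_def)
  also have "\<dots> = contract (concat (map2 (\<lambda>g u. map (\<lambda>x. [1 * g a * x ! 0, x ! 1]) u) gs us)) P"
    by (rule contract_Atensor_eq[OF assms quasibase])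
  also have "\<dots> = (\<Sum>(g, u)\<leftarrow>zip gs us. g a * contract u P)"
    by (simp add: contract_def split_def o_def sum_list_map_concat sum_list_const_mult[symmetric] mult.assoc)
  finally show ?thesis .
qed

lemma Sset_expansion:
  assumes "\<alpha> \<in> Sset \<phi>"
  shows "(\<Sum>(g, u)\<leftarrow>zip gs us. ractF g (contract u \<alpha>)) = \<alpha>"
proof
  fix a
  show "(\<Sum>(g, u)\<leftarrow>zip gs us. ractF g (contract u \<alpha>)) a = \<alpha> a"
    using Eset_expansion[OF subsetD[OF Sset_subset_Eset assms], of a]
    by (simp add: sum_list_fun_apply ractF_def split_def o_def)
qed

lemma AT_hom_expansion:
  assumes "F \<in> AT_hom \<phi> (Suc (Suc k))" "length z = Suc k"
  shows "F [a # z] = (\<Sum>(g, u)\<leftarrow>zip gs us. g a * contract_first u F [z])"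
proof -
  have "contract_first u F [z] = contract u (\<lambda>y. F [y # z])" for u
    by (simp add: contract_first_def)
  then show ?thesis
    using Eset_expansion[OF AT_hom_first_slot_in_Eset[OF assms], of a] by (simp only:)
qed

text \<open>The inverse \<open>F \<mapsto> \<Sum>\<^sub>j \<gamma>\<^sub>j \<otimes> u\<^sub>j\<^sup>1 F(u\<^sub>j\<^sup>2 \<otimes> -)\<close>, applied recursively to the
  remaining slots.\<close>

fun tensor_of_hom :: "nat \<Rightarrow> ('a list list \<Rightarrow> 'a) \<Rightarrow> ('a \<Rightarrow> 'a) list list" where
  "tensor_of_hom 0 F = [[\<lambda>a. F [[a]]]]"
| "tensor_of_hom (Suc k) F =
    concat (map (\<lambda>(g, u). map ((#) g) (tensor_of_hom k (contract_first u F))) (zip gs us))"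

lemma tensor_of_hom_tuples:
  "F \<in> AT_hom \<phi> (Suc k) \<Longrightarrow> set (tensor_of_hom k F) \<subseteq> tuples (SE_list \<phi> k)"
proof (induction k arbitrary: F)
  case 0
  then show ?case using AT_hom_first_slot_in_Eset[OF 0, of "[]"] by (simp add: SE_list_0)
next
  case (Suc k)
  then show ?case
    using contract_first_in_AT_hom in_set_zipD by (fastforce simp: SE_list_Suc)
qed

lemma eval_tensor_of_hom:
  "F \<in> AT_hom \<phi> (Suc k) \<Longrightarrow> length x = Suc k \<Longrightarrow> eval_tensor (tensor_of_hom k F) [x] = F [x]"
proof (induction k arbitrary: F x)
  case 0
  then obtain a where "x = [a]" by (auto simp: length_Suc_conv)
  then show ?case by (simp add: eval_tensor_singleton)
next
  case (Suc k)
  then obtain a z where x: "x = a # z" and z: "length z = Suc k"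
    by (auto simp: length_Suc_conv)
  have "eval_tensor (tensor_of_hom (Suc k) F) [x] =
      (\<Sum>(g, u)\<leftarrow>zip gs us. g a * eval_tensor (tensor_of_hom k (contract_first u F)) [z])"
    by (simp add: x eval_tensor_singleton sum_list_map_concat split_def o_def sum_list_const_mult)
  also have "\<dots> = (\<Sum>(g, u)\<leftarrow>zip gs us. g a * contract_first u F [z])"
    using Suc.IH[OF contract_first_in_AT_hom[OF _ Suc.prems(1)] z] in_set_zipD
    by (auto intro!: arg_cong[where f = sum_list] map_cong)
  also have "\<dots> = F [x]"
    using AT_hom_expansion[OF Suc.prems(1) z] x by simp
  finally show ?case .
qed

lemma tensor_of_hom_cong:
  "(\<And>x. length x = Suc k \<Longrightarrow> F [x] = F' [x]) \<Longrightarrow> tensor_of_hom k F = tensor_of_hom k F'"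
proof (induction k arbitrary: F F')
  case 0
  then have "F [[a]] = F' [[a]]" for a by simp
  then show ?case by simp
next
  case (Suc k)
  have "contract_first u F [z] = contract_first u F' [z]" if "length z = Suc k" for u z
  proof -
    have "F [y # z] = F' [y # z]" for y
      using Suc.prems that by simp
    then show ?thesis by (simp add: contract_first_def)
  qed
  then have "tensor_of_hom k (contract_first u F) = tensor_of_hom k (contract_first u F')" for u
    by (intro Suc.IH) blast
  then show ?case by simp
qed

lemma tensor_eq_Sset_expansion:
  assumes "f \<in> Sset \<phi>" "fs \<in> tuples (SE_list \<phi> k)"
  shows "tensor_eq (SE_list \<phi> (Suc k)) (Rset \<phi>) ractF lactF
    (map (\<lambda>(g, u). ractF g (contract u f) # fs) (zip gs us)) [f # fs]"
proof -
  let ?vs = "map (\<lambda>(g, u). ractF g (contract u f)) (zip gs us)"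
  have "set ?vs \<subseteq> Sset \<phi>"
    using assms(1) by (auto intro!: ractF_in_Sset contract_in_Rset dest: in_set_zipD)
  then have "tensor_eq (SE_list \<phi> (Suc k)) (Rset \<phi>) ractF lactF [(f # fs)[0 := sum_list ?vs]]
      (map (\<lambda>v. (f # fs)[0 := v]) ?vs)"
    using assms by (intro tensor_eq_update_sum_list) (auto simp: SE_list_Suc zero_in_Sset add_in_Sset)
  then show ?thesis
    using Sset_expansion[OF assms(1)] by (auto simp: split_def o_def intro: tensor_eq.sym)
qed

lemma tensor_eq_push_contract:
  assumes t: "set t \<subseteq> tuples (SE_list \<phi> (Suc k))"
  shows "tensor_eq (SE_list \<phi> (Suc k)) (Rset \<phi>) ractF lactF
    (concat (map (\<lambda>(g, u). map ((#) g) (push_contract u t)) (zip gs us))) t"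
proof -
  let ?M = "SE_list \<phi> (Suc k)" and ?R = "Rset \<phi>"
  \<comment> \<open>\<open>\<gamma>\<^sub>j \<otimes> r\<^sub>j y\<close> becomes \<open>\<gamma>\<^sub>j r\<^sub>j \<otimes> y\<close>; regrouping by \<open>y\<close>,
    \<open>\<Sum>\<^sub>j \<gamma>\<^sub>j r\<^sub>j = f\<close> by \<open>Sset_expansion\<close>.\<close>
  define moved where "moved p y = ractF (fst p) (contract (snd p) (hd y)) # tl y"
    for p :: "('a \<Rightarrow> 'a) \<times> 'a list list" and y :: "('a \<Rightarrow> 'a) list"
  have y: "\<exists>f fs. y = f # fs \<and> f \<in> Sset \<phi> \<and> fs \<in> tuples (SE_list \<phi> k)" if "y \<in> set t" for y
    using subsetD[OF t that] by (cases y) (auto simp: SE_list_Suc)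
  have "tensor_eq ?M ?R ractF lactF [fst p # (tl y)[0 := lactF (contract (snd p) (hd y)) (tl y ! 0)]]
      [moved p y]" if "p \<in> set (zip gs us)" and "y \<in> set t" for p y
  proof -
    obtain f fs where "y = f # fs" "f \<in> Sset \<phi>" "fs \<in> tuples (SE_list \<phi> k)"
      using y[OF \<open>y \<in> set t\<close>] by blast
    moreover have "fst p \<in> Sset \<phi>" "snd p \<in> Tset \<phi>"
      using in_set_zipD[of "fst p" "snd p"] \<open>p \<in> set (zip gs us)\<close> by simp_all
    ultimately show ?thesis
      unfolding moved_def by (simp add: tensor_eq_balance_contract)
  qed
  then have "tensor_eq ?M ?R ractF lactF (concat (map (\<lambda>(g, u). map ((#) g) (push_contract u t)) (zip gs us)))
      (concat (map (\<lambda>p. map (moved p) t) (zip gs us)))"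
    unfolding push_contract_def split_def map_map o_def
    by (intro tensor_eq_concat_map tensor_eq_map) blast
  also have "tensor_eq ?M ?R ractF lactF \<dots> (concat (map (\<lambda>y. map (\<lambda>p. moved p y) (zip gs us)) t))"
    by (rule tensor_eq_mset[OF conjunct2[OF tensor_eq_tuples[OF calculation]] mset_concat_map_swap])
  also have "tensor_eq ?M ?R ractF lactF \<dots> (concat (map (\<lambda>y. [y]) t))"
  proof (rule tensor_eq_concat_map)
    fix y assume "y \<in> set t"
    then obtain f fs where f: "y = f # fs" "f \<in> Sset \<phi>" "fs \<in> tuples (SE_list \<phi> k)"
      using y by blast
    have "map (\<lambda>p. moved p y) (zip gs us) = map (\<lambda>(g, u). ractF g (contract u f) # fs) (zip gs us)"
      by (simp add: moved_def split_def f)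
    then show "tensor_eq ?M ?R ractF lactF (map (\<lambda>p. moved p y) (zip gs us)) [y]"
      unfolding f(1) by (simp only: tensor_eq_Sset_expansion[OF f(2,3)])
  qed
  finally show ?thesis by simp
qed

lemma tensor_of_hom_eval_tensor:
  "set t \<subseteq> tuples (SE_list \<phi> k) \<Longrightarrow>
    tensor_eq (SE_list \<phi> k) (Rset \<phi>) ractF lactF (tensor_of_hom k (eval_tensor t)) t"
proof (induction k arbitrary: t)
  case 0
  have y: "y = [hd y]" "hd y \<in> Eset \<phi>" if "y \<in> set t" for y
    using subsetD[OF "0.prems" that] by (cases y; simp add: SE_list_0)+
  have "prod_apply y [a] = hd y a" if "y \<in> set t" for y a
    using y(1)[OF that] by (cases y) auto
  then have "(\<lambda>a. eval_tensor t [[a]]) = sum_list (map hd t)"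
    by (intro ext) (simp add: eval_tensor_singleton sum_list_fun_apply cong: map_cong)
  then have "tensor_of_hom 0 (eval_tensor t) = [[0][0 := sum_list (map hd t)]]"
    by simp
  also have "tensor_eq (SE_list \<phi> 0) (Rset \<phi>) ractF lactF \<dots> (map (\<lambda>v. [0][0 := v]) (map hd t))"
    using y(2) by (intro tensor_eq_update_sum_list) (auto simp: SE_list_0 zero_in_Eset add_in_Eset)
  also have "map (\<lambda>v. [0][0 := v]) (map hd t) = t"
    using y(1) by (induction t) auto
  finally show ?case .
next
  case (Suc k)
  have "tensor_of_hom (Suc k) (eval_tensor t) =
      concat (map (\<lambda>(g, u). map ((#) g) (tensor_of_hom k (eval_tensor (push_contract u t)))) (zip gs us))"
  proof -
    have "tensor_of_hom k (contract_first u (eval_tensor t)) = tensor_of_hom k (eval_tensor (push_contract u t))"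
      for u by (intro tensor_of_hom_cong contract_first_eval_tensor[OF Suc.prems])
    then show ?thesis by simp
  qed
  also have "tensor_eq (SE_list \<phi> (Suc k)) (Rset \<phi>) ractF lactF \<dots>
      (concat (map (\<lambda>(g, u). map ((#) g) (push_contract u t)) (zip gs us)))"
  proof (rule tensor_eq_concat_map)
    fix p assume "p \<in> set (zip gs us)"
    moreover obtain g u where "p = (g, u)" by fastforce
    ultimately have "g \<in> Sset \<phi>" "u \<in> Tset \<phi>" using in_set_zipD by auto
    with \<open>p = (g, u)\<close> show "tensor_eq (SE_list \<phi> (Suc k)) (Rset \<phi>) ractF lactF
        ((\<lambda>(g, u). map ((#) g) (tensor_of_hom k (eval_tensor (push_contract u t)))) p)
        ((\<lambda>(g, u). map ((#) g) (push_contract u t)) p)"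
      unfolding SE_list_Suc using Suc.IH[OF push_contract_tuples[OF _ Suc.prems]]
      by (simp add: tensor_eq_map_Cons)
  qed
  also have "tensor_eq (SE_list \<phi> (Suc k)) (Rset \<phi>) ractF lactF \<dots> t"
    by (rule tensor_eq_push_contract[OF Suc.prems])
  finally show ?case .
qed

lemma tensor_hom_iso_SE_list: "tensor_hom_iso \<phi> (SE_list \<phi> k)"
  unfolding tensor_hom_iso_def length_SE_list
proof (intro conjI allI impI ballI)
  fix t assume "set t \<subseteq> tuples (SE_list \<phi> k)"
  then show "eval_tensor t \<in> AT_hom \<phi> (Suc k)" by (rule eval_tensor_in_AT_hom)
next
  fix t t'
  assume t: "set t \<subseteq> tuples (SE_list \<phi> k)" and t': "set t' \<subseteq> tuples (SE_list \<phi> k)"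
  show "(\<forall>l. set l \<subseteq> Atuples (Suc k) \<longrightarrow> eval_tensor t l = eval_tensor t' l) \<longleftrightarrow>
      tensor_eq (SE_list \<phi> k) (Rset \<phi>) ractF lactF t t'"
  proof
    assume "\<forall>l. set l \<subseteq> Atuples (Suc k) \<longrightarrow> eval_tensor t l = eval_tensor t' l"
    then have "tensor_of_hom k (eval_tensor t) = tensor_of_hom k (eval_tensor t')"
      by (intro tensor_of_hom_cong) simp
    then show "tensor_eq (SE_list \<phi> k) (Rset \<phi>) ractF lactF t t'"
      using tensor_of_hom_eval_tensor[OF t] tensor_of_hom_eval_tensor[OF t']
      by (metis tensor_eq.sym tensor_eq.trans)
  qed (use eval_tensor_tensor_eq in blast)
next
  fix F assume F: "F \<in> AT_hom \<phi> (Suc k)"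
  have "F l = eval_tensor (tensor_of_hom k F) l" if "set l \<subseteq> Atuples (Suc k)" for l
    using that AT_hom_conv_sum_list[OF F that] eval_tensor_of_hom[OF F]
    by (simp add: eval_tensor_conv_sum_list eval_tensor_singleton subset_iff cong: map_cong)
  then show "\<exists>t. set t \<subseteq> tuples (SE_list \<phi> k) \<and> (\<forall>l. set l \<subseteq> Atuples (Suc k) \<longrightarrow> F l = eval_tensor t l)"
    using tensor_of_hom_tuples[OF F] by blast
qed

end

theorem lemma4p1:
  fixes \<phi> :: "'b::ring_1 \<Rightarrow> 'a::ring_1"
  assumes "unital_hom \<phi>"
    and "right_D2 \<phi>"
  shows "tensor_hom_iso \<phi> [Sset \<phi>, Eset \<phi>] \<and> tensor_hom_iso \<phi> [Sset \<phi>, Sset \<phi>, Eset \<phi>]"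
proof -
  \<comment> \<open>Only the image of \<open>\<phi>\<close> matters.\<close>
  obtain gs us where "right_D2_quasibase \<phi> gs us"
    using assms(2) unfolding right_D2_def right_D2_quasibase_def by blast
  then have "tensor_hom_iso \<phi> (SE_list \<phi> 1)" "tensor_hom_iso \<phi> (SE_list \<phi> 2)"
    by (simp_all add: right_D2_quasibase.tensor_hom_iso_SE_list)
  moreover have "SE_list \<phi> 1 = [Sset \<phi>, Eset \<phi>]" "SE_list \<phi> 2 = [Sset \<phi>, Sset \<phi>, Eset \<phi>]"
    by (simp_all add: SE_list_def numeral_2_eq_2)
  ultimately show ?thesis by simp
qed

end
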